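(* For $m,n\ge1$, \[ G^{(1)}_{m,n}=\frac{(-1)^n}{n!}\int_0^1\binom{t}{m}\left[{n\atop 1}\right]_{t-1}dt . \]
   Context: Define $G^{(1)}_{m,n}$ ($m,n\ge0$) by the formal power series $\sum_{m,n\ge0}G^{(1)}_{m,n}x^my^n=\dfrac{y\log(1+x)-x\log(1+y)}{\log(1+x)-\log(1+y)}$. $\binom{t}{m}=t(t-1)\cdots(t-m+1)/m!$. The Stirling polynomials of the first kind $\left[{n\atop m}\right]_x\in\mathbb Z[x]$ ($n\ge m\ge0$) are defined by $\sum_{m=0}^n\left[{n\atop m}\right]_x y^m=(x+y)(x+y+1)\cdots(x+y+n-1)$. *)

theory Defs
  imports "HOL-Analysis.Analysis" "HOL-Computational_Algebra.Computational_Algebra"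
begin

text \<open>Bivariate formal power series over the reals are modelled as 'real fps fps':
  the outer variable is y, the inner variable is x; the coefficient of x^m y^n of F
  is 'F $ n $ m'.\<close>

definition bvX :: "real fps fps" where "bvX = fps_const fps_X"
definition bvY :: "real fps fps" where "bvY = fps_X"

text \<open>log(1+x) and log(1+y) as bivariate series.\<close>
definition logX :: "real fps fps" where "logX = fps_const (fps_ln 1)"
definition logY :: "real fps fps" where "logY = Abs_fps (\<lambda>n. fps_const (fps_ln 1 $ n))"

text \<open>The quotient (y log(1+x) - x log(1+y)) / (log(1+x) - log(1+y)) in the
  (integral-domain) ring of bivariate formal power series: the unique F with
  F * (log(1+x) - log(1+y)) = y log(1+x) - x log(1+y).\<close>
definition G1_series :: "real fps fps" where
  "G1_series = (THE F. F * (logX - logY) = bvY * logX - bvX * logY)"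

definition G1 :: "nat \<Rightarrow> nat \<Rightarrow> real" where
  "G1 m n = G1_series $ n $ m"

text \<open>Stirling polynomials of the first kind:
  sum_m [n,m]_x y^m = (x+y)(x+y+1)...(x+y+n-1).\<close>
definition stirling1_poly :: "nat \<Rightarrow> nat \<Rightarrow> real \<Rightarrow> real" where
  "stirling1_poly n m x = coeff (\<Prod>i<n. [: x + of_nat i, 1 :]) m"

end

theory Submission
  imports Defs
begin

text \<open>Write b_m(t) = binom(t, m), c_n(t) = b_n(1 - t) and l_k for the k-th coefficient of
  log(1 + x). Coefficientwise, d/dt (1 + x)^t = log(1 + x) (1 + x)^t says b_m' = sum_j l_(m-j) b_j,
  hence sum_i l_(n-i) c_i' = - c_n''. Multiplying H = sum_(m,n) (int_0^1 b_m c_n') x^m y^n by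
  log(1 + x) - log(1 + y) therefore gives the coefficients int_0^1 (b_m' c_n' + b_m c_n''), which
  by integration by parts are boundary terms; these add up to (y - x) log(1 + y), so the quotient
  defining G^(1) is H + y. Finally c_n(t) is (-1)^n/n! times the rising factorial (t - 1)^(n),
  whose derivative is the Stirling polynomial [n, 1]_(t-1).\<close>

lemma pderiv_sum: "pderiv (\<Sum>x\<in>A. f x) = (\<Sum>x\<in>A. pderiv (f x))"
  by (induction A rule: infinite_finite_induct) (simp_all add: pderiv_add)

definition gbinomial_poly :: "nat \<Rightarrow> 'a::field_char_0 poly" where
  "gbinomial_poly n = smult (1 / fact n) (\<Prod>i<n. [:- of_nat i, 1:])"

lemma poly_gbinomial_poly [simp]: "poly (gbinomial_poly n) t = t gchoose n"
  by (simp add: gbinomial_poly_def gbinomial_prod_rev poly_prod atLeast0LessThan)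

lemma gbinomial_poly_0 [simp]: "gbinomial_poly 0 = 1"
  by (simp add: gbinomial_poly_def)

lemma gbinomial_poly_Suc_shift:
  "pcompose (gbinomial_poly (Suc m)) [:1, 1:] = gbinomial_poly (Suc m) + gbinomial_poly m"
  by (simp add: poly_eq_poly_eq_iff[symmetric] fun_eq_iff poly_pcompose gbinomial_Suc_Suc add.commute)

lemma gbinomial_poly_Suc_absorption:
  "gbinomial_poly (Suc j) =
     smult (1 / of_nat (Suc j)) ([:0, 1:] * pcompose (gbinomial_poly j) [:-1, 1:])"
  by (simp add: poly_eq_poly_eq_iff[symmetric] fun_eq_iff poly_pcompose gbinomial_absorption'
      del: of_nat_Suc)

lemma poly_pderiv_gbinomial_poly_0:
  "poly (pderiv (gbinomial_poly k)) 0 = (fps_ln 1 $ k :: 'a::field_char_0)"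
proof (cases k)
  case (Suc j)
  have "poly (pderiv (gbinomial_poly k)) 0 = ((-1) gchoose j :: 'a) / of_nat (Suc j)"
    by (simp add: Suc gbinomial_poly_Suc_absorption pderiv_smult pderiv_mult pderiv_pCons
        poly_pcompose del: of_nat_Suc)
  also have "\<dots> = (-1) ^ j / of_nat (Suc j)"
    by (simp add: gbinomial_pochhammer pochhammer_fact[symmetric] del: of_nat_Suc)
  finally show ?thesis by (simp add: Suc fps_ln_nth del: of_nat_Suc)
qed (simp add: fps_ln_nth)

lemma poly_eq_0_if_nat_roots:
  fixes p :: "'a::{idom,ring_char_0} poly"
  assumes "\<And>n::nat. poly p (of_nat n) = 0"
  shows "p = 0"
proof (rule ccontr)
  assume "p \<noteq> 0"
  then have "finite {x. poly p x = 0}" by (rule poly_roots_finite)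
  moreover have "range (of_nat :: nat \<Rightarrow> 'a) \<subseteq> {x. poly p x = 0}" using assms by auto
  ultimately show False
    using range_inj_infinite[OF inj_of_nat] finite_subset by blast
qed

lemma poly_seq_eq_0_by_difference:
  fixes E :: "nat \<Rightarrow> 'a::{idom,ring_char_0} poly"
  assumes "E 0 = 0" and "\<And>m. poly (E (Suc m)) 0 = 0"
    and "\<And>m x. poly (E (Suc m)) (x + 1) = poly (E (Suc m)) x + poly (E m) x"
  shows "E m = 0"
proof (induction m)
  case (Suc m)
  have "poly (E (Suc m)) (of_nat k) = 0" for k
  proof (induction k)
    case (Suc k)
    then show ?case using assms(3)[of m "of_nat k"] \<open>E m = 0\<close> by (simp add: add.commute)
  qed (simp add: assms(2))
  then show ?case by (rule poly_eq_0_if_nat_roots)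
qed (rule assms(1))

lemma poly_pderiv_gbinomial_poly_Suc_shift:
  "poly (pderiv (gbinomial_poly (Suc m))) (x + 1) =
     poly (pderiv (gbinomial_poly (Suc m))) x + poly (pderiv (gbinomial_poly m)) (x :: 'a::field_char_0)"
proof -
  have "pcompose (pderiv (gbinomial_poly (Suc m))) [:1, 1:] =
      pderiv (gbinomial_poly (Suc m)) + pderiv (gbinomial_poly m :: 'a poly)"
    using arg_cong[OF gbinomial_poly_Suc_shift[of m], of pderiv]
    by (simp add: pderiv_pcompose pderiv_pCons pderiv_add)
  from arg_cong[OF this, of "\<lambda>p. poly p x"] show ?thesis
    by (simp add: poly_pcompose add.commute)
qed

lemma poly_pderiv_gbinomial_poly_1:
  "poly (pderiv (gbinomial_poly n)) 1 = (fps_ln 1 $ n + fps_ln 1 $ (n - 1) :: 'a::field_char_0)"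
proof (cases n)
  case (Suc k)
  then show ?thesis
    using poly_pderiv_gbinomial_poly_Suc_shift[of k "0 :: 'a"] by (simp add: poly_pderiv_gbinomial_poly_0)
qed (simp add: fps_ln_nth)

text \<open>Both sides p_m satisfy p_(m+1)(x + 1) = p_(m+1)(x) + p_m(x) and agree at 0.\<close>

lemma pderiv_gbinomial_poly:
  "pderiv (gbinomial_poly m :: 'a::field_char_0 poly) =
     (\<Sum>j\<le>m. smult (fps_ln 1 $ (m - j)) (gbinomial_poly j))"
proof -
  define S :: "nat \<Rightarrow> 'a poly"
    where "S m = (\<Sum>j\<le>m. smult (fps_ln 1 $ (m - j)) (gbinomial_poly j))" for m
  have poly_S_Suc: "poly (S (Suc m)) x =
      fps_ln 1 $ Suc m + (\<Sum>i\<le>m. fps_ln 1 $ (m - i) * (x gchoose Suc i))" for m x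
    by (simp add: S_def poly_sum sum.atMost_Suc_shift del: sum.atMost_Suc)
  have "pderiv (gbinomial_poly m) - S m = 0"
  proof (rule poly_seq_eq_0_by_difference)
    show "pderiv (gbinomial_poly 0) - S 0 = 0"
      by (simp add: S_def fps_ln_nth)
    show "poly (pderiv (gbinomial_poly (Suc m)) - S (Suc m)) 0 = 0" for m
      by (simp add: poly_S_Suc poly_pderiv_gbinomial_poly_0)
    show "poly (pderiv (gbinomial_poly (Suc m)) - S (Suc m)) (x + 1) =
        poly (pderiv (gbinomial_poly (Suc m)) - S (Suc m)) x +
        poly (pderiv (gbinomial_poly m) - S m) x" for m x
    proof -
      have "poly (S (Suc m)) (x + 1) =
          poly (S (Suc m)) x + (\<Sum>i\<le>m. fps_ln 1 $ (m - i) * (x gchoose i))"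
        by (simp add: poly_S_Suc gbinomial_Suc_Suc distrib_left sum.distrib)
      also have "(\<Sum>i\<le>m. fps_ln 1 $ (m - i) * (x gchoose i)) = poly (S m) x"
        by (simp add: S_def poly_sum)
      finally show ?thesis
        by (simp add: poly_pderiv_gbinomial_poly_Suc_shift)
    qed
  qed
  then show ?thesis by (simp add: S_def)
qed

definition gbinomial_poly_flip :: "nat \<Rightarrow> 'a::field_char_0 poly" where
  "gbinomial_poly_flip n = pcompose (gbinomial_poly n) [:1, -1:]"

lemma poly_pderiv_gbinomial_poly_flip:
  "poly (pderiv (gbinomial_poly_flip n)) x = - poly (pderiv (gbinomial_poly n)) (1 - x)"
  by (simp add: gbinomial_poly_flip_def pderiv_pcompose pderiv_pCons poly_pcompose)

lemma pderiv_gbinomial_poly_flip: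
  "pderiv (gbinomial_poly_flip n :: 'a::field_char_0 poly) =
     - (\<Sum>i\<le>n. smult (fps_ln 1 $ (n - i)) (gbinomial_poly_flip i))"
  by (simp add: gbinomial_poly_flip_def pderiv_pcompose pderiv_pCons pderiv_gbinomial_poly
      pcompose_sum pcompose_smult)

definition rising_poly :: "nat \<Rightarrow> 'a::comm_semiring_1 poly" where
  "rising_poly n = (\<Prod>i<n. [:of_nat i, 1:])"

lemma poly_rising_poly: "poly (rising_poly n) x = pochhammer x n"
  by (simp add: rising_poly_def poly_prod pochhammer_prod atLeast0LessThan add.commute)

lemma stirling1_poly_1: "stirling1_poly n 1 x = poly (pderiv (rising_poly n)) x"
proof -
  have "(\<Prod>i<n. [:x + of_nat i, 1:]) = pcompose (rising_poly n) [:x, 1:]"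
    by (simp add: rising_poly_def pcompose_prod pcompose_pCons add.commute)
  moreover have "coeff p 1 = poly (pderiv p) 0" for p :: "real poly"
    using coeff_pderiv[of p 0] by (simp add: poly_0_coeff_0)
  ultimately show ?thesis
    by (simp add: stirling1_poly_def pderiv_pcompose poly_pcompose pderiv_pCons)
qed

lemma gbinomial_poly_flip_eq_rising_poly:
  "gbinomial_poly_flip n =
     smult ((-1) ^ n / fact n) (pcompose (rising_poly n) [:-1, 1:] :: 'a::field_char_0 poly)"
  by (simp add: poly_eq_poly_eq_iff[symmetric] fun_eq_iff gbinomial_poly_flip_def poly_pcompose
      poly_rising_poly gbinomial_pochhammer)

lemma poly_pderiv_gbinomial_poly_flip_stirling1:
  "poly (pderiv (gbinomial_poly_flip n)) t = (-1) ^ n / fact n * stirling1_poly n 1 (t - 1)"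
  unfolding gbinomial_poly_flip_eq_rising_poly stirling1_poly_1
  by (simp add: pderiv_smult pderiv_pcompose pderiv_pCons poly_pcompose)

definition poly_integral :: "real poly \<Rightarrow> real" where
  "poly_integral p = integral {0..1} (poly p)"

lemma poly_integrable_on: "poly p integrable_on {a..b :: real}"
  by (intro integrable_continuous_interval continuous_at_imp_continuous_on ballI
      DERIV_isCont[OF poly_DERIV])

lemma poly_integral_pderiv: "poly_integral (pderiv p) = poly p 1 - poly p 0"
  unfolding poly_integral_def
proof (rule integral_unique, rule fundamental_theorem_of_calculus)
  show "(poly p has_vector_derivative poly (pderiv p) x) (at x within {0..1})" for x
    by (simp add: has_real_derivative_iff_has_vector_derivative[symmetric] DERIV_subset[OF poly_DERIV])
qed simp

lemma poly_integral_add: "poly_integral (p + q) = poly_integral p + poly_integral q"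
proof -
  have "poly (p + q) = (\<lambda>x. poly p x + poly q x)" by (simp add: fun_eq_iff)
  then show ?thesis by (simp add: poly_integral_def integral_add poly_integrable_on)
qed

lemma poly_integral_minus: "poly_integral (- p) = - poly_integral p"
proof -
  have "poly (- p) = (\<lambda>x. - poly p x)" by (simp add: fun_eq_iff)
  then show ?thesis by (simp add: poly_integral_def integral_neg poly_integrable_on)
qed

lemma poly_integral_lincomb:
  "finite A \<Longrightarrow> poly_integral (\<Sum>i\<in>A. smult (c i) (p i)) = (\<Sum>i\<in>A. c i * poly_integral (p i))"
proof -
  have "poly (\<Sum>i\<in>A. smult (c i) (p i)) = (\<lambda>x. \<Sum>i\<in>A. c i * poly (p i) x)"
    by (simp add: fun_eq_iff poly_sum)
  moreover assume "finite A"
  ultimately show ?thesis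
    by (simp add: poly_integral_def integral_sum poly_integrable_on integrable_on_mult_right)
qed

lemma poly_integral_by_parts:
  "poly_integral (pderiv p * q) + poly_integral (p * pderiv q) =
     poly p 1 * poly q 1 - poly p 0 * poly q 0"
proof -
  have "pderiv (p * q) = pderiv p * q + p * pderiv q"
    by (simp add: pderiv_mult algebra_simps)
  then show ?thesis
    using poly_integral_pderiv[of "p * q"] by (simp add: poly_integral_add)
qed

definition G1_integral :: "nat \<Rightarrow> nat \<Rightarrow> real" where
  "G1_integral m n = poly_integral (gbinomial_poly m * pderiv (gbinomial_poly_flip n))"

text \<open>Integration by parts; the right-hand side is the coefficient of x^m y^n in
  (y - x) log(1 + y).\<close>

lemma G1_integral_recurrence:
  "(\<Sum>j\<le>m. fps_ln 1 $ (m - j) * G1_integral j n) - (\<Sum>i\<le>n. fps_ln 1 $ (n - i) * G1_integral m i) =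
     (if m = 0 then fps_ln 1 $ (n - 1) else 0) - (if m = 1 then fps_ln 1 $ n else 0)"
proof -
  let ?b = "gbinomial_poly m :: real poly" and ?c = "gbinomial_poly_flip n :: real poly"
  have "(\<Sum>j\<le>m. fps_ln 1 $ (m - j) * G1_integral j n) = poly_integral (pderiv ?b * pderiv ?c)"
    by (simp add: G1_integral_def pderiv_gbinomial_poly sum_distrib_right mult_smult_left
        poly_integral_lincomb)
  moreover have "pderiv (pderiv ?c) =
      - (\<Sum>i\<le>n. smult (fps_ln 1 $ (n - i)) (pderiv (gbinomial_poly_flip i)))"
    by (simp add: pderiv_gbinomial_poly_flip pderiv_sum pderiv_minus pderiv_smult)
  then have "(\<Sum>i\<le>n. fps_ln 1 $ (n - i) * G1_integral m i) = - poly_integral (?b * pderiv (pderiv ?c))"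
    by (simp add: G1_integral_def sum_distrib_left mult_smult_right poly_integral_lincomb
        poly_integral_minus)
  ultimately have "(\<Sum>j\<le>m. fps_ln 1 $ (m - j) * G1_integral j n) -
      (\<Sum>i\<le>n. fps_ln 1 $ (n - i) * G1_integral m i) =
      (1 gchoose m) * poly (pderiv ?c) 1 - (0 gchoose m) * poly (pderiv ?c) 0"
    using poly_integral_by_parts[of ?b "pderiv ?c"] by simp
  also have "\<dots> = (1 gchoose m) * - fps_ln 1 $ n + (0 gchoose m) * (fps_ln 1 $ n + fps_ln 1 $ (n - 1))"
    by (simp add: poly_pderiv_gbinomial_poly_flip poly_pderiv_gbinomial_poly_0
        poly_pderiv_gbinomial_poly_1 algebra_simps)
  also have "\<dots> = (if m = 0 then fps_ln 1 $ (n - 1) else 0) - (if m = 1 then fps_ln 1 $ n else 0)"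
  proof -
    have "(1 :: real) gchoose Suc (Suc j) = 0" for j
      using binomial_gbinomial[of 1 "Suc (Suc j)", where 'a = real] by simp
    then show ?thesis by (cases m; cases "m - 1") simp_all
  qed
  finally show ?thesis .
qed

lemma nth_nth_mult_logX: "((F * logX) $ n) $ m = (\<Sum>j\<le>m. F $ n $ j * fps_ln 1 $ (m - j))"
  by (simp add: logX_def, simp add: fps_mult_nth atLeast0AtMost)

lemma nth_nth_mult_logY: "((F * logY) $ n) $ m = (\<Sum>i\<le>n. F $ i $ m * fps_ln 1 $ (n - i))"
  unfolding fps_mult_nth[of F logY n] by (simp add: logY_def fps_sum_nth atLeast0AtMost)

lemma logX_minus_logY_nonzero: "logX - logY \<noteq> 0"
proof
  assume "logX - logY = 0"
  then have "((logX - logY) $ 0) $ 1 = 0" by simp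
  then show False by (simp add: logX_def logY_def fps_ln_nth)
qed

lemma G1_series_eqI:
  assumes "F * (logX - logY) = bvY * logX - bvX * logY"
  shows "G1_series = F"
  unfolding G1_series_def
proof (rule the_equality)
  fix F' assume "F' * (logX - logY) = bvY * logX - bvX * logY"
  with assms have "F' * (logX - logY) = F * (logX - logY)" by simp
  with logX_minus_logY_nonzero show "F' = F" by (metis mult_cancel_right)
qed (rule assms)

definition G1_integral_series :: "real fps fps" where
  "G1_integral_series = Abs_fps (\<lambda>n. Abs_fps (\<lambda>m. G1_integral m n))"

lemma G1_integral_series_mult: "G1_integral_series * (logX - logY) = (bvY - bvX) * logY"
proof (intro fps_ext)
  fix n m
  have "((G1_integral_series * (logX - logY)) $ n) $ m =
      (\<Sum>j\<le>m. G1_integral j n * fps_ln 1 $ (m - j)) - (\<Sum>i\<le>n. G1_integral m i * fps_ln 1 $ (n - i))"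
    by (simp add: right_diff_distrib nth_nth_mult_logX nth_nth_mult_logY G1_integral_series_def)
  also have "\<dots> = (if m = 0 then fps_ln 1 $ (n - 1) else 0) - (if m = 1 then fps_ln 1 $ n else 0)"
    using G1_integral_recurrence[of m n] by (simp add: mult.commute)
  also have "\<dots> = (((bvY - bvX) * logY) $ n) $ m"
    by (cases n) (simp_all add: left_diff_distrib bvY_def bvX_def logY_def fps_ln_nth)
  finally show "((G1_integral_series * (logX - logY)) $ n) $ m = (((bvY - bvX) * logY) $ n) $ m" .
qed

lemma G1_series_eq: "G1_series = G1_integral_series + bvY"
proof (rule G1_series_eqI)
  have "(G1_integral_series + bvY) * (logX - logY) = (bvY - bvX) * logY + bvY * (logX - logY)"
    by (simp add: distrib_right G1_integral_series_mult)
  also have "\<dots> = bvY * logX - bvX * logY"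
    by (simp add: algebra_simps)
  finally show "(G1_integral_series + bvY) * (logX - logY) = bvY * logX - bvX * logY" .
qed

theorem proposition5p4:
  fixes m n :: nat
  assumes "m \<ge> 1" and "n \<ge> 1"
  shows "G1 m n = (-1) ^ n / fact n *
           integral {0..1} (\<lambda>t::real. (t gchoose m) * stirling1_poly n 1 (t - 1))"
proof -
  have "G1 m n = G1_integral m n"
    using assms by (simp add: G1_def G1_series_eq G1_integral_series_def bvY_def)
  also have "poly (gbinomial_poly m * pderiv (gbinomial_poly_flip n)) =
      (\<lambda>t. (-1) ^ n / fact n * ((t gchoose m) * stirling1_poly n 1 (t - 1)))"
    by (simp add: fun_eq_iff poly_pderiv_gbinomial_poly_flip_stirling1)
  then have "G1_integral m n =
      integral {0..1} (\<lambda>t. (-1) ^ n / fact n * ((t gchoose m) * stirling1_poly n 1 (t - 1)))"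
    by (simp add: G1_integral_def poly_integral_def)
  finally show ?thesis by simp
qed

end
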